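(* Let $\mathbb{K}$ be a perfect field, $I\subset\mathbb{K}[X_1,\dots,X_n]$ a zero-dimensional ideal, $Q=\mathbb{K}[X_1,\dots,X_n]/I$, and $P_{\min}\in\mathbb{K}[X_n]$ the minimal polynomial of $X_n$ in $Q$, factored as $P_{\min}=P_1^{e_1}\cdots P_K^{e_K}$ with the $P_k$ pairwise distinct irreducible polynomials and $e_k\ge1$. For $k\in\{1,\dots,K\}$ let $J_k=I+\langle P_k^{e_k}\rangle$, $Q_k=\mathbb{K}[X_1,\dots,X_n]/J_k$, $T_k=P_{\min}/P_k^{e_k}$, and define $\varphi_k:Q^*\to Q_k^*$ by $\varphi_k(\ell)(f)=\ell(T_k\hat f\bmod I)$, where $\hat f$ is any lift of $f\in Q_k$ to $\mathbb{K}[X_1,\dots,X_n]$. Then $\varphi_k$ is well defined, $\mathbb{K}$-linear and onto.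
   Context: $Q^*=\mathrm{Hom}_{\mathbb{K}}(Q,\mathbb{K})$ and $Q_k^*=\mathrm{Hom}_{\mathbb{K}}(Q_k,\mathbb{K})$. *)

theory Defs
  imports "HOL-Library.Poly_Mapping" "HOL-Computational_Algebra.Computational_Algebra"
begin

text \<open>Multivariate polynomials over 'a in the variables indexed by the (finite) type 'v:
  monomials are finitely supported exponent vectors, polynomials are finitely supported
  coefficient functions on monomials (convolution product from Poly_Mapping).\<close>
type_synonym ('v, 'a) mpoly = "('v \<Rightarrow>\<^sub>0 nat) \<Rightarrow>\<^sub>0 'a"

definition mconst :: "'a::zero \<Rightarrow> ('v, 'a) mpoly" where
  "mconst c = Poly_Mapping.single 0 c"

definition mvar :: "'v \<Rightarrow> ('v, 'a::{zero,one}) mpoly" where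
  "mvar v = Poly_Mapping.single (Poly_Mapping.single v 1) 1"

definition upoly_eval :: "'a::comm_ring_1 poly \<Rightarrow> 'v \<Rightarrow> ('v, 'a) mpoly" where
  "upoly_eval p v = poly (map_poly mconst p) (mvar v)"

definition is_ideal :: "'r::comm_ring_1 set \<Rightarrow> bool" where
  "is_ideal I \<longleftrightarrow> 0 \<in> I \<and> (\<forall>a\<in>I. \<forall>b\<in>I. a + b \<in> I) \<and> (\<forall>a\<in>I. \<forall>r. r * a \<in> I)"

definition zero_dimensional :: "('v, 'a::field) mpoly set \<Rightarrow> bool" where
  "zero_dimensional I \<longleftrightarrow> is_ideal I \<and> I \<noteq> UNIV \<and>
     (\<exists>B. finite B \<and> (\<forall>f. \<exists>c. f - (\<Sum>b\<in>B. mconst (c b) * b) \<in> I))"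

definition perfect_field :: "'a::field itself \<Rightarrow> bool" where
  "perfect_field _ \<longleftrightarrow> CHAR('a) = 0 \<or> (\<forall>x::'a. \<exists>y. y ^ CHAR('a) = x)"

definition is_min_poly :: "('v, 'a::field) mpoly set \<Rightarrow> 'v \<Rightarrow> 'a poly \<Rightarrow> bool" where
  "is_min_poly I v p \<longleftrightarrow> lead_coeff p = 1 \<and> upoly_eval p v \<in> I \<and>
     (\<forall>q. q \<noteq> 0 \<and> upoly_eval q v \<in> I \<longrightarrow> degree p \<le> degree q)"

definition k_linear :: "(('v, 'a::field) mpoly \<Rightarrow> 'a) \<Rightarrow> bool" where
  "k_linear l \<longleftrightarrow> (\<forall>f g. l (f + g) = l f + l g) \<and> (\<forall>c f. l (mconst c * f) = c * l f)"

text \<open>The dual (K[X]/I)^* , identified with the K-linear functionals on K[X] vanishing on I.\<close>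
definition quot_dual :: "('v, 'a::field) mpoly set \<Rightarrow> (('v, 'a) mpoly \<Rightarrow> 'a) set" where
  "quot_dual I = {l. k_linear l \<and> (\<forall>f\<in>I. l f = 0)}"

definition ideal_plus :: "'r::comm_ring_1 set \<Rightarrow> 'r \<Rightarrow> 'r set" where
  "ideal_plus I g = {a + r * g | a r. a \<in> I}"

definition phi :: "('v, 'a::field) mpoly \<Rightarrow> (('v, 'a) mpoly \<Rightarrow> 'a) \<Rightarrow> (('v, 'a) mpoly \<Rightarrow> 'a)" where
  "phi T l = (\<lambda>f. l (T * f))"

end

theory Submission
  imports Defs
begin

text \<open>
  Write \<open>P\<^sub>m\<^sub>i\<^sub>n = Q R\<close> with \<open>Q = P\<^sub>k ^ e\<^sub>k\<close> and \<open>R = T\<^sub>k\<close>. Distinct monic irreducibles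
  are coprime, so \<open>u R + w Q = 1\<close> for some polynomials \<open>u, w\<close>. Since \<open>R(X\<^sub>n) Q(X\<^sub>n) \<in> I\<close>,
  multiplication by \<open>R(X\<^sub>n)\<close> maps \<open>I + \<langle>Q(X\<^sub>n)\<rangle>\<close> into \<open>I\<close>, so \<open>\<phi>\<^sub>k\<close> is well defined; and
  a preimage of \<open>m \<in> Q\<^sub>k\<^sup>*\<close> is \<open>f \<mapsto> m(u(X\<^sub>n) f)\<close>, because \<open>f \<equiv> u(X\<^sub>n) R(X\<^sub>n) f\<close> modulo
  \<open>Q(X\<^sub>n)\<close>.
\<close>

definition comaximal :: "'a::comm_ring_1 \<Rightarrow> 'a \<Rightarrow> bool" where
  "comaximal a b \<longleftrightarrow> (\<exists>u w. u * a + w * b = 1)"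

lemma comaximal_commute: "comaximal a b \<Longrightarrow> comaximal b a"
  unfolding comaximal_def by (metis add.commute)

lemma comaximal_1_left: "comaximal 1 b"
  unfolding comaximal_def by (rule exI[of _ 1], rule exI[of _ 0]) simp

lemma comaximal_mult_left:
  assumes "comaximal a c" "comaximal b c"
  shows "comaximal (a * b) c"
proof -
  obtain u1 w1 where 1: "u1 * a + w1 * c = 1" using assms(1) by (auto simp: comaximal_def)
  obtain u2 w2 where 2: "u2 * b + w2 * c = 1" using assms(2) by (auto simp: comaximal_def)
  have "(u1 * a + w1 * c) * (u2 * b + w2 * c) = 1" using 1 2 by simp
  then have "(u1 * u2) * (a * b) + (u1 * a * w2 + w1 * u2 * b + w1 * w2 * c) * c = 1"
    by (simp add: algebra_simps)
  then show ?thesis unfolding comaximal_def by blast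
qed

lemma comaximal_power_left: "comaximal a c \<Longrightarrow> comaximal (a ^ n) c"
  by (induction n) (simp_all add: comaximal_1_left comaximal_mult_left)

lemma comaximal_power: "comaximal a b \<Longrightarrow> comaximal (a ^ m) (b ^ n)"
  by (metis comaximal_commute comaximal_power_left)

lemma comaximal_prod_left:
  "(\<And>i. i \<in> A \<Longrightarrow> comaximal (f i) c) \<Longrightarrow> comaximal (\<Prod>i\<in>A. f i) c"
  by (induction A rule: infinite_finite_induct) (simp_all add: comaximal_1_left comaximal_mult_left)

text \<open>A combination \<open>d\<close> of \<open>a, b\<close> of least Euclidean size divides every combination,
  since the remainder of a combination modulo \<open>d\<close> is again one; hence \<open>d\<close> is a unit.\<close>

lemma coprime_imp_comaximal:
  fixes a b :: "'a::euclidean_ring"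
  assumes "coprime a b"
  shows "comaximal a b"
proof -
  define S where "S = (\<lambda>p. p \<noteq> 0 \<and> (\<exists>u w. p = u * a + w * b))"
  have "a \<noteq> 0 \<or> b \<noteq> 0" using assms by auto
  then have "S a \<or> S b" unfolding S_def by (metis add_0 add_0_right mult_1 mult_zero_left)
  then obtain d where dS: "S d" and dmin: "\<And>p. S p \<Longrightarrow> euclidean_size d \<le> euclidean_size p"
    using ex_has_least_nat[of S _ euclidean_size] by blast
  from dS obtain u w where d0: "d \<noteq> 0" and d: "d = u * a + w * b" unfolding S_def by blast
  have dvd_comb: "d dvd x" if x: "x = u' * a + w' * b" for x u' w'
  proof (rule ccontr)
    assume nd: "\<not> d dvd x"
    have "x mod d = x - x div d * d" by (simp add: minus_div_mult_eq_mod)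
    also have "\<dots> = (u' - x div d * u) * a + (w' - x div d * w) * b"
      unfolding x d by (simp add: algebra_simps)
    finally have "S (x mod d)" unfolding S_def using nd by (auto simp: dvd_eq_mod_eq_0)
    then have "euclidean_size d \<le> euclidean_size (x mod d)" by (rule dmin)
    with mod_size_less[OF d0] show False by (simp add: not_le[symmetric])
  qed
  have "d dvd a" by (rule dvd_comb[of _ 1 0]) simp
  moreover have "d dvd b" by (rule dvd_comb[of _ 0 1]) simp
  ultimately have "is_unit d" using assms by (metis coprime_common_divisor)
  then obtain c where "1 = d * c" by (auto elim: dvdE)
  then have "(c * u) * a + (c * w) * b = 1" unfolding d by (simp add: algebra_simps)
  then show ?thesis unfolding comaximal_def by blast
qed

lemma coprime_monic_irreducible:
  fixes p q :: "'a::field poly"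
  assumes p: "irreducible p" "lead_coeff p = 1" and q: "irreducible q" "lead_coeff q = 1"
    and "p \<noteq> q"
  shows "coprime p q"
proof (rule coprimeI)
  fix d assume dp: "d dvd p" and dq: "d dvd q"
  show "is_unit d"
  proof (rule ccontr)
    assume "\<not> is_unit d"
    with p(1) dp have "p dvd d" by (auto simp: irreducible_altdef)
    then have "p dvd q" using dq by (rule dvd_trans)
    then obtain f where qf: "q = p * f" by (auto elim: dvdE)
    with q(1) p(1) have "is_unit f" by (auto simp: irreducible_def)
    then obtain c where "f = [:c:]" by (auto elim: is_unit_polyE)
    moreover have "lead_coeff q = lead_coeff p * lead_coeff f" unfolding qf by (rule lead_coeff_mult)
    ultimately have "c = 1" using p(2) q(2) by simp
    with qf \<open>f = [:c:]\<close> have "q = p" by simp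
    with \<open>p \<noteq> q\<close> show False by simp
  qed
qed

lemma mconst_add: "mconst (a + b) = mconst a + mconst b"
  by (simp add: mconst_def single_add)

lemma mconst_mult: "mconst ((a::'a::comm_ring_1) * b) = (mconst a * mconst b :: ('v, 'a) mpoly)"
  by (simp add: mconst_def mult_single)

lemma mconst_0 [simp]: "mconst 0 = 0"
  by (simp add: mconst_def)

lemma upoly_eval_0 [simp]: "upoly_eval 0 v = 0"
  by (simp add: upoly_eval_def)

lemma upoly_eval_1 [simp]: "upoly_eval 1 v = (1 :: ('v, 'a::comm_ring_1) mpoly)"
  by (simp add: upoly_eval_def mconst_def)

lemma upoly_eval_pCons: "upoly_eval (pCons a p) v = mconst a + mvar v * upoly_eval p v"
  by (simp add: upoly_eval_def map_poly_pCons mconst_def)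

lemma upoly_eval_add [simp]: "upoly_eval (p + q) v = upoly_eval p v + upoly_eval q v"
  by (induction p q rule: poly_induct2) (simp_all add: upoly_eval_pCons mconst_add algebra_simps)

lemma upoly_eval_smult:
  "upoly_eval (smult (a::'a::comm_ring_1) p) v = (mconst a * upoly_eval p v :: ('v, 'a) mpoly)"
  by (induction p) (simp_all add: upoly_eval_pCons mconst_mult algebra_simps)

lemma upoly_eval_mult [simp]:
  "upoly_eval ((p::'a::comm_ring_1 poly) * q) v = (upoly_eval p v * upoly_eval q v :: ('v, 'a) mpoly)"
  by (induction p) (simp_all add: upoly_eval_smult upoly_eval_pCons algebra_simps)

lemma is_ideal_add: "is_ideal I \<Longrightarrow> a \<in> I \<Longrightarrow> b \<in> I \<Longrightarrow> a + b \<in> I"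
  by (simp add: is_ideal_def)

lemma is_ideal_mult: "is_ideal I \<Longrightarrow> a \<in> I \<Longrightarrow> r * a \<in> I"
  by (simp add: is_ideal_def)

lemma subset_ideal_plus: "I \<subseteq> ideal_plus I q"
  unfolding ideal_plus_def by (force intro: exI[of _ 0])

lemma mult_mem_ideal_plus: "is_ideal I \<Longrightarrow> r * q \<in> ideal_plus I q"
  unfolding ideal_plus_def is_ideal_def by force

lemma k_linear_phi: "k_linear l \<Longrightarrow> k_linear (phi t l)"
  unfolding k_linear_def phi_def by (simp add: distrib_left) (metis mult.left_commute)

lemma phi_mem_quot_dual_ideal_plus:
  assumes "is_ideal I" and "t * q \<in> I" and "l \<in> quot_dual I"
  shows "phi t l \<in> quot_dual (ideal_plus I q)"
  unfolding quot_dual_def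
proof (intro CollectI conjI ballI)
  show "k_linear (phi t l)" using assms(3) by (simp add: quot_dual_def k_linear_phi)
  fix f assume "f \<in> ideal_plus I q"
  then obtain a r where f: "f = a + r * q" "a \<in> I" unfolding ideal_plus_def by blast
  have "t * f = t * a + r * (t * q)" unfolding f by (simp add: algebra_simps)
  also have "\<dots> \<in> I"
    using is_ideal_add[OF assms(1) is_ideal_mult[OF assms(1) f(2)] is_ideal_mult[OF assms(1,2)]] .
  finally show "phi t l f = 0" using assms(3) by (simp add: quot_dual_def phi_def)
qed

lemma quot_dual_ideal_plus_subset_phi_image:
  assumes I: "is_ideal I" and bezout: "u * t + w * q = 1"
  shows "quot_dual (ideal_plus I q) \<subseteq> phi t ` quot_dual I"
proof
  fix m assume m: "m \<in> quot_dual (ideal_plus I q)"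
  then have lin: "k_linear m" and van: "\<And>f. f \<in> ideal_plus I q \<Longrightarrow> m f = 0"
    by (auto simp: quot_dual_def)
  define l where "l = phi u m"
  have "l \<in> quot_dual I"
    unfolding quot_dual_def l_def
  proof (intro CollectI conjI ballI)
    show "k_linear (phi u m)" using lin by (rule k_linear_phi)
    fix f assume "f \<in> I"
    then have "u * f \<in> ideal_plus I q" using subset_ideal_plus is_ideal_mult[OF I] by blast
    then show "phi u m f = 0" using van by (simp add: phi_def)
  qed
  moreover have "phi t l = m"
  proof
    fix f
    have "f = u * (t * f) + (w * f) * q"
      using arg_cong[OF bezout, of "\<lambda>x. x * f"] by (simp add: algebra_simps)
    then have "m f = m (u * (t * f)) + m ((w * f) * q)"
      using lin by (metis k_linear_def)
    then show "phi t l f = m f" using van[OF mult_mem_ideal_plus[OF I]] by (simp add: l_def phi_def)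
  qed
  ultimately show "m \<in> phi t ` quot_dual I" by blast
qed

theorem lemma8:
  fixes I :: "('v::finite, 'a::field) mpoly set"
    and xn :: 'v
    and Pmin :: "'a poly" and P :: "nat \<Rightarrow> 'a poly" and e :: "nat \<Rightarrow> nat"
    and K k :: nat
  assumes perf: "perfect_field TYPE('a)"
    and zd: "zero_dimensional I"
    and minp: "is_min_poly I xn Pmin"
    and irr: "\<forall>i\<in>{1..K}. irreducible (P i) \<and> lead_coeff (P i) = 1 \<and> e i \<ge> 1"
    and dist: "inj_on P {1..K}"
    and fact: "Pmin = (\<Prod>i=1..K. P i ^ e i)"
    and k: "k \<in> {1..K}"
  defines "J \<equiv> ideal_plus I (upoly_eval (P k ^ e k) xn)"
    and "T \<equiv> Pmin div (P k ^ e k)"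
  shows "(\<forall>l\<in>quot_dual I. phi (upoly_eval T xn) l \<in> quot_dual J)
    \<and> (\<forall>l1\<in>quot_dual I. \<forall>l2\<in>quot_dual I. \<forall>c a.
          phi (upoly_eval T xn) (\<lambda>f. c * l1 f + a * l2 f)
          = (\<lambda>f. c * phi (upoly_eval T xn) l1 f + a * phi (upoly_eval T xn) l2 f))
    \<and> quot_dual J \<subseteq> phi (upoly_eval T xn) ` quot_dual I"
proof -
  define Q where "Q = P k ^ e k"
  define R where "R = (\<Prod>i\<in>{1..K}-{k}. P i ^ e i)"
  have "irreducible (P k)" using irr k by blast
  then have "P k \<noteq> 0" by auto
  have Pmin: "Pmin = Q * R" unfolding fact Q_def R_def using k by (simp add: prod.remove)
  then have "T = R" using \<open>P k \<noteq> 0\<close> by (simp add: T_def Q_def)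
  have "comaximal R Q"
    unfolding R_def Q_def
  proof (intro comaximal_prod_left comaximal_power coprime_imp_comaximal coprime_monic_irreducible)
    fix i assume "i \<in> {1..K} - {k}"
    then show "irreducible (P i)" "lead_coeff (P i) = 1" "irreducible (P k)" "lead_coeff (P k) = 1"
      and "P i \<noteq> P k" using irr dist k by (auto dest: inj_onD)
  qed
  then obtain u w where "u * T + w * Q = 1" unfolding \<open>T = R\<close> by (auto simp: comaximal_def)
  then have bezout: "upoly_eval u xn * upoly_eval T xn + upoly_eval w xn * upoly_eval Q xn = 1"
    by (metis upoly_eval_1 upoly_eval_add upoly_eval_mult)
  have ideal: "is_ideal I" using zd by (simp add: zero_dimensional_def)
  have "upoly_eval T xn * upoly_eval Q xn \<in> I"
    using minp \<open>T = R\<close> by (simp add: is_min_poly_def Pmin mult.commute)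
  then show ?thesis
    using phi_mem_quot_dual_ideal_plus[OF ideal]
      quot_dual_ideal_plus_subset_phi_image[OF ideal bezout]
    by (simp add: J_def Q_def phi_def)
qed

end
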